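(* Let $\mathcal{B}$ be a Borel-measurable partition of $\Omega$ with $\underline{P}(B)>0$ for all $B\in\mathcal{B}$, and let $A\in\mathscr{B}(\Omega)$. If $\mathcal{B}$ dilates (respectively strictly dilates) $A$ under either Dempster's rule or the Geometric rule, then $\mathcal{B}$ dilates (respectively strictly dilates) $A$ under the generalized Bayes rule.
   Context: $\Omega$ is a separable, completely metrizable space with Borel $\sigma$-algebra $\mathscr{B}(\Omega)$; $\underline{P}$ is a Choquet capacity of order 2 on $\mathscr{B}(\Omega)$ (a coherent lower probability with weakly compact set of dominating measures satisfying $\underline{P}(A\cup B)\ge\underline{P}(A)+\underline{P}(B)-\underline{P}(A\cap B)$); $\Pi=\{P:P\ge\underline{P}\}$, $\underline{P}(A)=\inf_{P\in\Pi}P(A)$, $\overline{P}(A)=\sup_{P\in\Pi}P(A)=1-\underline{P}(A^c)$. Generalized Bayes rule: $\underline{P}_{\mathfrak{B}}(A\mid B)=\inf_{P\in\Pi}P(A\cap B)/P(B)$, $\overline{P}_{\mathfrak{B}}(A\mid B)=\sup_{P\in\Pi}P(A\cap B)/P(B)$. Dempster's rule: $\overline{P}_{\mathfrak{D}}(A\mid B)=\overline{P}(A\cap B)/\overline{P}(B)$, $\underline{P}_{\mathfrak{D}}(A\mid B)=1-\overline{P}_{\mathfrak{D}}(A^c\mid B)$. Geometric rule: $\underline{P}_{\mathfrak{G}}(A\mid B)=\underline{P}(A\cap B)/\underline{P}(B)$, $\overline{P}_{\mathfrak{G}}(A\mid B)=1-\underline{P}_{\mathfrak{G}}(A^c\mid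 B)$. For a rule with conditional lower/upper probabilities $\underline{P}_\bullet,\overline{P}_\bullet$, $\mathcal{B}$ strictly dilates $A$ if $\sup_{B\in\mathcal{B}}\underline{P}_\bullet(A\mid B)<\underline{P}(A)\le\overline{P}(A)<\inf_{B\in\mathcal{B}}\overline{P}_\bullet(A\mid B)$; $\mathcal{B}$ dilates $A$ if this holds with either (but not both) outer strict inequality allowed to be an equality. *)

theory Defs
  imports "HOL-Probability.Probability"
begin

definition core :: "('a::topological_space set \<Rightarrow> real) \<Rightarrow> 'a measure set" where
  "core lP = {M. prob_space M \<and> sets M = sets (borel :: 'a measure) \<and>
                 (\<forall>A\<in>sets (borel :: 'a measure). lP A \<le> measure M A)}"

definition weak_conv_seq :: "(nat \<Rightarrow> 'a::topological_space measure) \<Rightarrow> 'a measure \<Rightarrow> bool" where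
  "weak_conv_seq Ms M \<longleftrightarrow>
     (\<forall>f :: 'a \<Rightarrow> real. continuous_on UNIV f \<and> bounded (range f) \<longrightarrow>
        (\<lambda>n. integral\<^sup>L (Ms n) f) \<longlonglongrightarrow> integral\<^sup>L M f)"

text \<open>(Sequential) weak compactness; on a Polish space the weak topology on probability
  measures is metrizable, so this is compactness in the weak topology.\<close>
definition weakly_compact_set :: "'a::topological_space measure set \<Rightarrow> bool" where
  "weakly_compact_set S \<longleftrightarrow>
     (\<forall>Ms :: nat \<Rightarrow> 'a measure. (\<forall>n. Ms n \<in> S) \<longrightarrow> (\<exists>r M. strict_mono r \<and> M \<in> S \<and> weak_conv_seq (Ms \<circ> r) M))"

definition choquet2 :: "('a::topological_space set \<Rightarrow> real) \<Rightarrow> bool" where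
  "choquet2 lP \<longleftrightarrow>
     core lP \<noteq> {} \<and>
     (\<forall>A\<in>sets (borel :: 'a measure). lP A = (INF M\<in>core lP. measure M A)) \<and>
     weakly_compact_set (core lP) \<and>
     (\<forall>A\<in>sets (borel :: 'a measure). \<forall>B\<in>sets (borel :: 'a measure).
        lP (A \<union> B) \<ge> lP A + lP B - lP (A \<inter> B))"

definition upperP :: "('a::topological_space set \<Rightarrow> real) \<Rightarrow> 'a set \<Rightarrow> real" where
  "upperP lP A = (SUP M\<in>core lP. measure M A)"

text \<open>Generalized Bayes rule.\<close>
definition lowerB :: "('a::topological_space set \<Rightarrow> real) \<Rightarrow> 'a set \<Rightarrow> 'a set \<Rightarrow> real" where
  "lowerB lP A B = (INF M\<in>core lP. measure M (A \<inter> B) / measure M B)"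
definition upperB :: "('a::topological_space set \<Rightarrow> real) \<Rightarrow> 'a set \<Rightarrow> 'a set \<Rightarrow> real" where
  "upperB lP A B = (SUP M\<in>core lP. measure M (A \<inter> B) / measure M B)"

text \<open>Dempster's rule.\<close>
definition upperD :: "('a::topological_space set \<Rightarrow> real) \<Rightarrow> 'a set \<Rightarrow> 'a set \<Rightarrow> real" where
  "upperD lP A B = upperP lP (A \<inter> B) / upperP lP B"
definition lowerD :: "('a::topological_space set \<Rightarrow> real) \<Rightarrow> 'a set \<Rightarrow> 'a set \<Rightarrow> real" where
  "lowerD lP A B = 1 - upperD lP (- A) B"

text \<open>Geometric rule.\<close>
definition lowerG :: "('a::topological_space set \<Rightarrow> real) \<Rightarrow> 'a set \<Rightarrow> 'a set \<Rightarrow> real" where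
  "lowerG lP A B = lP (A \<inter> B) / lP B"
definition upperG :: "('a::topological_space set \<Rightarrow> real) \<Rightarrow> 'a set \<Rightarrow> 'a set \<Rightarrow> real" where
  "upperG lP A B = 1 - lowerG lP (- A) B"

definition strictly_dilates ::
  "('a set \<Rightarrow> real) \<Rightarrow> ('a set \<Rightarrow> real) \<Rightarrow> ('a set \<Rightarrow> 'a set \<Rightarrow> real) \<Rightarrow> ('a set \<Rightarrow> 'a set \<Rightarrow> real)
    \<Rightarrow> 'a set set \<Rightarrow> 'a set \<Rightarrow> bool" where
  "strictly_dilates lP uP lc uc \<B> A \<longleftrightarrow>
     (SUP B\<in>\<B>. lc A B) < lP A \<and> lP A \<le> uP A \<and> uP A < (INF B\<in>\<B>. uc A B)"

definition dilates ::
  "('a set \<Rightarrow> real) \<Rightarrow> ('a set \<Rightarrow> real) \<Rightarrow> ('a set \<Rightarrow> 'a set \<Rightarrow> real) \<Rightarrow> ('a set \<Rightarrow> 'a set \<Rightarrow> real)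
    \<Rightarrow> 'a set set \<Rightarrow> 'a set \<Rightarrow> bool" where
  "dilates lP uP lc uc \<B> A \<longleftrightarrow>
     lP A \<le> uP A \<and>
     (((SUP B\<in>\<B>. lc A B) \<le> lP A \<and> uP A < (INF B\<in>\<B>. uc A B)) \<or>
      ((SUP B\<in>\<B>. lc A B) < lP A \<and> uP A \<le> (INF B\<in>\<B>. uc A B)))"

definition borel_partition :: "'a::topological_space set set \<Rightarrow> bool" where
  "borel_partition \<B> \<longleftrightarrow>
     \<B> \<subseteq> sets (borel :: 'a measure) \<and> {} \<notin> \<B> \<and> \<Union>\<B> = UNIV \<and> disjoint \<B>"

end

theory Submission
  imports Defs
begin

text \<open>For every cell \<open>B\<close> of the partition, the interval of conditional probabilities given by the
  generalized Bayes rule contains the intervals given by Dempster's rule and by the Geometric rule: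
  each measure \<open>M\<close> in the core satisfies \<open>lowerB * M B \<le> M (A \<inter> B) \<le> upperB * M B\<close>, and taking
  suprema resp. infima over the core (\<open>upperP B\<close> resp. \<open>lP B\<close> in place of \<open>M B\<close>) compares the
  Bayes bounds with the Dempster resp. Geometric ones. Replacing a rule by a rule with wider
  conditional intervals can only lower the supremum of the lower and raise the infimum of the upper
  conditional probabilities over the partition, so (strict) dilation is inherited.\<close>

lemma core_prob_space: "M \<in> core lP \<Longrightarrow> prob_space M"
  and sets_core: "M \<in> core lP \<Longrightarrow> sets M = sets borel"
  and core_dominates: "M \<in> core lP \<Longrightarrow> X \<in> sets borel \<Longrightarrow> lP X \<le> measure M X"
  unfolding core_def by auto

lemma measure_core_le_1: "M \<in> core lP \<Longrightarrow> measure M X \<le> 1"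
  using prob_space.prob_le_1[OF core_prob_space] .

lemma measure_core_mono:
  assumes "M \<in> core lP" "X \<subseteq> Y" "Y \<in> sets borel"
  shows "measure M X \<le> measure M Y"
  using assms sets_core[OF assms(1)]
  by (intro finite_measure.finite_measure_mono prob_space.finite_measure core_prob_space) auto

lemma measure_core_Compl_Int:
  assumes "M \<in> core lP" "A \<in> sets borel" "B \<in> sets borel"
  shows "measure M (- A \<inter> B) = measure M B - measure M (A \<inter> B)"
proof -
  have "- A \<inter> B = B - A \<inter> B" by auto
  then show ?thesis
    using assms sets_core[OF assms(1)]
    by (simp add: finite_measure.finite_measure_Diff prob_space.finite_measure core_prob_space)
qed

lemma cond_ratio_core_le_1:
  assumes "M \<in> core lP" "B \<in> sets borel"
  shows "measure M (A \<inter> B) / measure M B \<le> 1"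
  using measure_core_mono[OF assms(1) _ assms(2), of "A \<inter> B"] measure_nonneg[of M B]
  by (auto simp: divide_le_eq_1 less_le)

lemma lowerB_le_cond_ratio:
  "M \<in> core lP \<Longrightarrow> lowerB lP A B \<le> measure M (A \<inter> B) / measure M B"
  unfolding lowerB_def by (rule cINF_lower) (auto intro: bdd_belowI[where m = 0])

lemma cond_ratio_le_upperB:
  "M \<in> core lP \<Longrightarrow> B \<in> sets borel \<Longrightarrow> measure M (A \<inter> B) / measure M B \<le> upperB lP A B"
  unfolding upperB_def by (rule cSUP_upper) (auto intro!: bdd_aboveI[where M = 1] cond_ratio_core_le_1)

lemma measure_core_le_upperP: "M \<in> core lP \<Longrightarrow> measure M X \<le> upperP lP X"
  unfolding upperP_def by (rule cSUP_upper) (auto intro!: bdd_aboveI[where M = 1] measure_core_le_1)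

locale lower_envelope =
  fixes lP :: "'a::topological_space set \<Rightarrow> real"
  assumes core_nonempty: "core lP \<noteq> {}"
    and lP_eq_INF: "X \<in> sets borel \<Longrightarrow> lP X = (INF M\<in>core lP. measure M X)"
begin

lemma lP_mono:
  assumes "X \<subseteq> Y" "X \<in> sets borel" "Y \<in> sets borel"
  shows "lP X \<le> lP Y"
proof -
  have "lP X \<le> measure M Y" if "M \<in> core lP" for M
    using core_dominates[OF that assms(2)] measure_core_mono[OF that assms(1,3)] by linarith
  then show ?thesis
    using core_nonempty by (auto simp: lP_eq_INF[OF assms(3)] intro!: cINF_greatest)
qed

lemma upperP_nonneg: "0 \<le> upperP lP X"
  using core_nonempty measure_core_le_upperP measure_nonneg order_trans by blast

lemma lowerB_nonneg: "0 \<le> lowerB lP A B"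
  unfolding lowerB_def using core_nonempty by (auto intro!: cINF_greatest)

lemma lowerB_le_1: "B \<in> sets borel \<Longrightarrow> lowerB lP A B \<le> 1"
  using core_nonempty lowerB_le_cond_ratio cond_ratio_core_le_1 order_trans by blast

lemma upperB_nonneg: "B \<in> sets borel \<Longrightarrow> 0 \<le> upperB lP A B"
  using core_nonempty cond_ratio_le_upperB[of _ lP B A]
  by (meson all_not_in_conv divide_nonneg_nonneg measure_nonneg order_trans)

lemma upperB_le_1: "B \<in> sets borel \<Longrightarrow> upperB lP A B \<le> 1"
  unfolding upperB_def using core_nonempty by (auto intro!: cSUP_least cond_ratio_core_le_1)

context
  fixes A B :: "'a set"
  assumes A: "A \<in> sets borel" and B: "B \<in> sets borel" and lP_B_pos: "lP B > 0"
begin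

lemma measure_core_cell_pos: "M \<in> core lP \<Longrightarrow> measure M B > 0"
  using core_dominates[of M lP B] B lP_B_pos by linarith

lemma upperP_cell_pos: "upperP lP B > 0"
  using core_nonempty measure_core_le_upperP measure_core_cell_pos
  by (meson ex_in_conv less_le_trans)

lemma lowerB_mult_le_measure: "M \<in> core lP \<Longrightarrow> lowerB lP A B * measure M B \<le> measure M (A \<inter> B)"
  using lowerB_le_cond_ratio[of M lP A B] measure_core_cell_pos
  by (simp add: le_divide_eq)

lemma measure_le_upperB_mult: "M \<in> core lP \<Longrightarrow> measure M (A \<inter> B) \<le> upperB lP A B * measure M B"
  using cond_ratio_le_upperB[OF _ B, of M lP A] measure_core_cell_pos
  by (simp add: divide_le_eq)

lemma lowerB_le_lowerD: "lowerB lP A B \<le> lowerD lP A B"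
proof -
  let ?l = "lowerB lP A B"
  have "measure M (- A \<inter> B) \<le> upperP lP B * (1 - ?l)" if M: "M \<in> core lP" for M
  proof -
    have "measure M (- A \<inter> B) \<le> measure M B * (1 - ?l)"
      using lowerB_mult_le_measure[OF M] measure_core_Compl_Int[OF M A B] by (simp add: algebra_simps)
    also have "\<dots> \<le> upperP lP B * (1 - ?l)"
      using measure_core_le_upperP[OF M] lowerB_le_1[OF B] by (intro mult_right_mono) auto
    finally show ?thesis .
  qed
  then have "upperP lP (- A \<inter> B) \<le> upperP lP B * (1 - ?l)"
    unfolding upperP_def using core_nonempty by (auto intro!: cSUP_least)
  then show ?thesis
    using upperP_cell_pos unfolding lowerD_def upperD_def by (simp add: field_simps)
qed

lemma upperD_le_upperB: "upperD lP A B \<le> upperB lP A B"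
proof -
  let ?h = "upperB lP A B"
  have "measure M (A \<inter> B) \<le> upperP lP B * ?h" if M: "M \<in> core lP" for M
    using measure_le_upperB_mult[OF M] measure_core_le_upperP[OF M, of B] upperB_nonneg[OF B]
    by (smt (verit) mult_right_mono mult.commute)
  then have "upperP lP (A \<inter> B) \<le> upperP lP B * ?h"
    unfolding upperP_def using core_nonempty by (auto intro!: cSUP_least)
  then show ?thesis
    using upperP_cell_pos unfolding upperD_def by (simp add: divide_le_eq mult.commute)
qed

lemma lowerB_le_lowerG: "lowerB lP A B \<le> lowerG lP A B"
proof -
  let ?l = "lowerB lP A B"
  have "?l * lP B \<le> measure M (A \<inter> B)" if M: "M \<in> core lP" for M
    using lowerB_mult_le_measure[OF M] core_dominates[OF M B] lowerB_nonneg
    by (smt (verit) mult_left_mono)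
  then have "?l * lP B \<le> lP (A \<inter> B)"
    using core_nonempty A B by (auto simp: lP_eq_INF intro!: cINF_greatest)
  then show ?thesis
    unfolding lowerG_def using lP_B_pos by (simp add: le_divide_eq)
qed

lemma upperG_le_upperB: "upperG lP A B \<le> upperB lP A B"
proof -
  let ?h = "upperB lP A B"
  have "(1 - ?h) * lP B \<le> measure M (- A \<inter> B)" if M: "M \<in> core lP" for M
  proof -
    have "(1 - ?h) * lP B \<le> (1 - ?h) * measure M B"
      using core_dominates[OF M B] upperB_le_1[OF B] by (intro mult_left_mono) auto
    then show ?thesis
      using measure_le_upperB_mult[OF M] measure_core_Compl_Int[OF M A B] by (simp add: algebra_simps)
  qed
  then have "(1 - ?h) * lP B \<le> lP (- A \<inter> B)"
    using core_nonempty A B by (auto simp: lP_eq_INF intro!: cINF_greatest)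
  then show ?thesis
    unfolding upperG_def lowerG_def using lP_B_pos by (simp add: field_simps)
qed

lemma lowerD_le_1: "lowerD lP A B \<le> 1"
  unfolding lowerD_def upperD_def using upperP_nonneg by simp

lemma upperD_nonneg: "0 \<le> upperD lP A B"
  unfolding upperD_def using upperP_nonneg by simp

lemma lowerG_le_1: "lowerG lP X B \<le> 1" if "X \<in> sets borel"
  unfolding lowerG_def using lP_mono[of "X \<inter> B" B] that B lP_B_pos by simp

lemma upperG_nonneg: "0 \<le> upperG lP A B"
  unfolding upperG_def using lowerG_le_1[of "- A"] A by simp

end

end

lemma choquet2_lower_envelope: "choquet2 lP \<Longrightarrow> lower_envelope lP"
  unfolding choquet2_def lower_envelope_def by auto

lemma dilation_inherited_by_wider_rule:
  assumes "\<B> \<noteq> {}"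
    and lower: "\<And>B. B \<in> \<B> \<Longrightarrow> lc' A B \<le> lc A B" "bdd_above ((\<lambda>B. lc A B) ` \<B>)"
    and upper: "\<And>B. B \<in> \<B> \<Longrightarrow> uc A B \<le> uc' A B" "bdd_below ((\<lambda>B. uc A B) ` \<B>)"
  shows "dilates lP uP lc uc \<B> A \<Longrightarrow> dilates lP uP lc' uc' \<B> A"
    and "strictly_dilates lP uP lc uc \<B> A \<Longrightarrow> strictly_dilates lP uP lc' uc' \<B> A"
proof -
  have "(SUP B\<in>\<B>. lc' A B) \<le> (SUP B\<in>\<B>. lc A B)"
    using assms(1) lower by (intro cSUP_mono) auto
  moreover have "(INF B\<in>\<B>. uc A B) \<le> (INF B\<in>\<B>. uc' A B)"
    using assms(1) upper by (intro cINF_mono) auto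
  ultimately show "dilates lP uP lc uc \<B> A \<Longrightarrow> dilates lP uP lc' uc' \<B> A"
    and "strictly_dilates lP uP lc uc \<B> A \<Longrightarrow> strictly_dilates lP uP lc' uc' \<B> A"
    unfolding dilates_def strictly_dilates_def by linarith+
qed

theorem corollary5p6:
  fixes lP :: "'a::polish_space set \<Rightarrow> real"
    and \<B> :: "'a set set" and A :: "'a set"
  assumes "choquet2 lP"
    and "borel_partition \<B>"
    and "\<forall>B\<in>\<B>. lP B > 0"
    and "A \<in> sets (borel :: 'a measure)"
  shows "(dilates lP (upperP lP) (lowerD lP) (upperD lP) \<B> A \<or>
          dilates lP (upperP lP) (lowerG lP) (upperG lP) \<B> A
            \<longrightarrow> dilates lP (upperP lP) (lowerB lP) (upperB lP) \<B> A)
       \<and> (strictly_dilates lP (upperP lP) (lowerD lP) (upperD lP) \<B> A \<or>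
          strictly_dilates lP (upperP lP) (lowerG lP) (upperG lP) \<B> A
            \<longrightarrow> strictly_dilates lP (upperP lP) (lowerB lP) (upperB lP) \<B> A)"
proof -
  interpret lower_envelope lP
    using assms(1) by (rule choquet2_lower_envelope)
  have cell: "B \<in> sets borel" "lP B > 0" if "B \<in> \<B>" for B
    using assms(2,3) that unfolding borel_partition_def by auto
  have "\<B> \<noteq> {}"
    using assms(2) unfolding borel_partition_def by auto
  note wider = dilation_inherited_by_wider_rule[OF this]
  note Dempster = wider[of "lowerB lP" A "lowerD lP" "upperD lP" "upperB lP"]
  note Geometric = wider[of "lowerB lP" A "lowerG lP" "upperG lP" "upperB lP"]
  show ?thesis
    using Dempster Geometric assms(4) cell
      lowerB_le_lowerD upperD_le_upperB lowerD_le_1 upperD_nonneg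
      lowerB_le_lowerG upperG_le_upperB lowerG_le_1 upperG_nonneg
    by (metis (no_types, lifting) bdd_aboveI2 bdd_belowI2)
qed

end
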